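(* Let $T$ be the regular rooted tree of valence $p\geq 2$ with the embedded wire diffeology $\mathcal{D}_T$, and equip $\operatorname{Aut}T$ with the functional diffeology. Let $P:\mathbb{R}\to\operatorname{Aut}T$ be a plot of this diffeology. Then each of the two sequences $(P(n))_{n\in\mathbb{N}}$ and $(P(-m))_{m\in\mathbb{N}}$ converges in the congruence topology on $\operatorname{Aut}T$.
   Context: Fix a finite alphabet $A$ with $|A|=p\geq 2$. The vertices of $T$ are the finite words over $A$ (the root is the empty word); the length $|u|$ of a word is its level; two vertices are joined by an edge iff they have the form $a_1\dots a_n$ and $a_1\dots a_na_{n+1}$. As a topological space, $T$ is the 1-dimensional CW complex obtained by realizing each edge as a copy of $[0,1]$, with its usual topology. $\operatorname{Aut}T$ is the group of bijections of the vertex set fixing the root and preserving adjacency; each is regarded as a homeomorphism of the geometric realization mapping each edge affinely onto its image edge. $\operatorname{Stab}(n)$ is the subgroup of automorphisms fixing every vertex of level $n$. The congruence topology on $\operatorname{Aut}T$ is the group topology in which the subgroups $\operatorname{Stab}(n)$, $n\in\mathbb{N}$, form a basis of neighbourhoods of the identity. A diffeology on a set $X$ is a collection of maps $U\to X$ ("plots"), $U$ ranging over open subsets of all $\mathbb{R}^n$, containing all constant maps, closed under precomposition with smooth maps, and satisfying the sheaf condition. The embedded wire diffeology $\mathcal{D}_T$ is the diffeology on $T$ generated by (i.e. the smallest diffeology containing) all maps $\gamma:\mathbb{R}\to T$ that are injective, continuous, and homeomorphisms onto their images. A map between diffeological spaces is smooth if it sends plots to plots. The functional diffeology on $C^\infty(T,T)$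 is the coarsest diffeology such that the evaluation map $C^\infty(T,T)\times T\to T$ is smooth (with the product diffeology, the coarsest making projections smooth); $\operatorname{Aut}T\subseteq C^\infty(T,T)$ carries the subset diffeology. Equivalently, $P:U\to\operatorname{Aut}T$ is a plot iff $(u,x)\mapsto P(u)(x)$ is smooth $U\times T\to T$. *)

theory Defs
  imports "HOL-Analysis.Analysis"
begin

text \<open>R^n is realised as the functions nat => real vanishing at all coordinates >= n,
  with the (product) topology, which on this subspace is the Euclidean one.\<close>

definition Rn :: "nat \<Rightarrow> (nat \<Rightarrow> real) set" where
  "Rn n = {x. \<forall>i\<ge>n. x i = 0}"

definition open_Rn :: "nat \<Rightarrow> (nat \<Rightarrow> real) set \<Rightarrow> bool" where
  "open_Rn n U \<longleftrightarrow> openin (top_of_set (Rn n)) U"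

definition has_partial :: "nat \<Rightarrow> ((nat \<Rightarrow> real) \<Rightarrow> real) \<Rightarrow> (nat \<Rightarrow> real) \<Rightarrow> real \<Rightarrow> bool" where
  "has_partial i f x d \<longleftrightarrow> ((\<lambda>t. f (x(i := x i + t))) has_real_derivative d) (at 0)"

text \<open>C-infinity real functions on an open U in R^n: continuous, and all partial derivatives
  exist and are again C-infinity (all iterated partial derivatives exist and are continuous).\<close>
coinductive smooth_fun :: "nat \<Rightarrow> (nat \<Rightarrow> real) set \<Rightarrow> ((nat \<Rightarrow> real) \<Rightarrow> real) \<Rightarrow> bool"
  for n :: nat and U :: "(nat \<Rightarrow> real) set" where
  "continuous_on U f \<Longrightarrow>
   (\<forall>i<n. \<exists>g. (\<forall>x\<in>U. has_partial i f x (g x)) \<and> smooth_fun n U g) \<Longrightarrow>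
   smooth_fun n U f"

definition smooth_map :: "nat \<Rightarrow> (nat \<Rightarrow> real) set \<Rightarrow> nat \<Rightarrow> ((nat \<Rightarrow> real) \<Rightarrow> (nat \<Rightarrow> real)) \<Rightarrow> bool" where
  "smooth_map m V n F \<longleftrightarrow> (\<forall>x\<in>V. F x \<in> Rn n) \<and> (\<forall>i<n. smooth_fun m V (\<lambda>x. F x i))"

text \<open>A diffeology on X: a set of plots (n, U, P), U open in R^n, P : U -> X
  (only the values of P on U matter).\<close>
definition is_diffeology :: "'x set \<Rightarrow> (nat \<times> (nat \<Rightarrow> real) set \<times> ((nat \<Rightarrow> real) \<Rightarrow> 'x)) set \<Rightarrow> bool" where
  "is_diffeology X D \<longleftrightarrow>
     (\<forall>n U P. (n, U, P) \<in> D \<longrightarrow> open_Rn n U \<and> P ` U \<subseteq> X) \<and>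
     (\<forall>n U c Q. open_Rn n U \<and> c \<in> X \<and> (\<forall>x\<in>U. Q x = c) \<longrightarrow> (n, U, Q) \<in> D) \<and>
     (\<forall>n U P m V F Q. (n, U, P) \<in> D \<and> open_Rn m V \<and> smooth_map m V n F \<and> F ` V \<subseteq> U
        \<and> (\<forall>x\<in>V. Q x = P (F x)) \<longrightarrow> (m, V, Q) \<in> D) \<and>
     (\<forall>n U P. open_Rn n U \<and> P ` U \<subseteq> X \<and>
        (\<forall>x\<in>U. \<exists>V. open_Rn n V \<and> x \<in> V \<and> V \<subseteq> U \<and> (n, V, P) \<in> D) \<longrightarrow> (n, U, P) \<in> D)"

definition generated_diffeology :: "'x set \<Rightarrow> (nat \<times> (nat \<Rightarrow> real) set \<times> ((nat \<Rightarrow> real) \<Rightarrow> 'x)) set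
    \<Rightarrow> (nat \<times> (nat \<Rightarrow> real) set \<times> ((nat \<Rightarrow> real) \<Rightarrow> 'x)) set" where
  "generated_diffeology X G = \<Inter>{D. is_diffeology X D \<and> G \<subseteq> D}"

text \<open>Vertices: words over the alphabet 'a (a finite type). A point of the realisation is
  either the root ([],0) or (w,t) with w nonempty and 0 < t \<le> 1: the point at parameter t
  on the edge from butlast w to w (t = 1 is the vertex w).\<close>

type_synonym 'a tpt = "'a list \<times> real"

definition Tpts :: "'a tpt set" where
  "Tpts = {([], 0)} \<union> {(w, t). w \<noteq> [] \<and> 0 < t \<and> t \<le> 1}"

definition vertex :: "'a list \<Rightarrow> 'a tpt" where
  "vertex v = (if v = [] then ([], 0) else (v, 1))"

definition edge_map :: "'a list \<Rightarrow> real \<Rightarrow> 'a tpt" where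
  "edge_map w s = (if s = 0 then vertex (butlast w) else (w, s))"

definition T_top :: "'a tpt topology" where
  "T_top = topology (\<lambda>U. U \<subseteq> Tpts \<and>
      (\<forall>w. w \<noteq> [] \<longrightarrow> openin (top_of_set {0..1}) {s \<in> {0..1}. edge_map w s \<in> U}))"

definition wire_generators :: "(nat \<times> (nat \<Rightarrow> real) set \<times> ((nat \<Rightarrow> real) \<Rightarrow> 'a tpt)) set" where
  "wire_generators = {(1, Rn 1, \<lambda>x. \<gamma> (x 0)) | \<gamma>. embedding_map euclideanreal T_top \<gamma>}"

definition D_T :: "(nat \<times> (nat \<Rightarrow> real) set \<times> ((nat \<Rightarrow> real) \<Rightarrow> 'a tpt)) set" where
  "D_T = generated_diffeology Tpts wire_generators"

definition adj :: "'a list \<Rightarrow> 'a list \<Rightarrow> bool" where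
  "adj u v \<longleftrightarrow> (\<exists>a. v = u @ [a]) \<or> (\<exists>a. u = v @ [a])"

definition AutT :: "('a list \<Rightarrow> 'a list) set" where
  "AutT = {\<sigma>. bij \<sigma> \<and> \<sigma> [] = [] \<and> (\<forall>u v. adj u v \<longleftrightarrow> adj (\<sigma> u) (\<sigma> v))}"

definition act :: "('a list \<Rightarrow> 'a list) \<Rightarrow> 'a tpt \<Rightarrow> 'a tpt" where
  "act \<sigma> p = (\<sigma> (fst p), snd p)"

definition Stab :: "nat \<Rightarrow> ('a list \<Rightarrow> 'a list) set" where
  "Stab n = {\<sigma> \<in> AutT. \<forall>v. length v = n \<longrightarrow> \<sigma> v = v}"

definition congruence_top :: "('a list \<Rightarrow> 'a list) topology" where
  "congruence_top = topology (\<lambda>U. U \<subseteq> AutT \<and>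
      (\<forall>\<sigma>\<in>U. \<exists>n. (\<lambda>\<tau>. \<sigma> \<circ> \<tau>) ` Stab n \<subseteq> U))"

text \<open>plots R -> Aut T of the functional diffeology: (u,x) |-> P(u)(x) is smooth R x T -> T,
  i.e. maps every plot of the product diffeology (a smooth f : U -> R paired with a plot
  Q of D_T) to a plot of D_T.\<close>
definition aut_plot :: "(real \<Rightarrow> ('a list \<Rightarrow> 'a list)) \<Rightarrow> bool" where
  "aut_plot P \<longleftrightarrow> (\<forall>u. P u \<in> AutT) \<and>
     (\<forall>n U f Q. open_Rn n U \<and> smooth_fun n U f \<and> (n, U, Q) \<in> D_T \<longrightarrow>
        (n, U, \<lambda>x. act (P (f x)) (Q x)) \<in> D_T)"

end

theory Submission
  imports Defs
begin

text \<open>Every plot P of Aut T is constant, so both sequences are constant. Indeed, the plots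
  of T that are continuous for the CW topology already form a diffeology containing the embedded
  wires, so every plot of \<open>\<D>\<^sub>T\<close> is continuous. Hence for each vertex v the path
  \<open>u \<mapsto> P(u)(v)\<close> is a continuous path in T through vertices only. Distinct vertices have
  disjoint open stars, so this path is locally constant, and therefore constant on the connected
  line.\<close>

lemma openin_T_top:
  "openin T_top U \<longleftrightarrow> U \<subseteq> Tpts \<and>
      (\<forall>w. w \<noteq> [] \<longrightarrow> openin (top_of_set {0..1}) {s \<in> {0..1}. edge_map w s \<in> U})"
proof -
  have top: "istopology (\<lambda>U::'a tpt set. U \<subseteq> Tpts \<and>
      (\<forall>w. w \<noteq> [] \<longrightarrow> openin (top_of_set {0..1}) {s \<in> {0..1}. edge_map w s \<in> U}))"
    unfolding istopology_def
  proof (rule conjI; intro allI impI)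
    fix S T :: "'a tpt set"
    assume "S \<subseteq> Tpts \<and> (\<forall>w. w \<noteq> [] \<longrightarrow> openin (top_of_set {0..1}) {s \<in> {0..1}. edge_map w s \<in> S})"
      and "T \<subseteq> Tpts \<and> (\<forall>w. w \<noteq> [] \<longrightarrow> openin (top_of_set {0..1}) {s \<in> {0..1}. edge_map w s \<in> T})"
    moreover have "{s \<in> {0..1}. edge_map w s \<in> S \<inter> T}
        = {s \<in> {0..1}. edge_map w s \<in> S} \<inter> {s \<in> {0..1}. edge_map w s \<in> T}" for w
      by blast
    ultimately show "S \<inter> T \<subseteq> Tpts \<and>
        (\<forall>w. w \<noteq> [] \<longrightarrow> openin (top_of_set {0..1}) {s \<in> {0..1}. edge_map w s \<in> S \<inter> T})"
      by auto
  next
    fix K :: "'a tpt set set"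
    assume K: "\<forall>S\<in>K. S \<subseteq> Tpts \<and>
        (\<forall>w. w \<noteq> [] \<longrightarrow> openin (top_of_set {0..1}) {s \<in> {0..1}. edge_map w s \<in> S})"
    have "{s \<in> {0..1}. edge_map w s \<in> \<Union>K} = (\<Union>S\<in>K. {s \<in> {0..1}. edge_map w s \<in> S})" for w
      by blast
    then show "\<Union>K \<subseteq> Tpts \<and>
        (\<forall>w. w \<noteq> [] \<longrightarrow> openin (top_of_set {0..1}) {s \<in> {0..1}. edge_map w s \<in> \<Union>K})"
      using K by auto
  qed
  show ?thesis
    unfolding T_top_def by (subst topology_inverse'[OF top]) (rule refl)
qed

lemma topspace_T_top: "topspace T_top = Tpts"
proof -
  have "{s \<in> {0..1}. edge_map w s \<in> Tpts} = {0..1::real}" if "w \<noteq> []" for w :: "'a list"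
    using that by (auto simp: edge_map_def vertex_def Tpts_def)
  then have "openin T_top (Tpts :: 'a tpt set)"
    unfolding openin_T_top by simp
  then show ?thesis
    by (metis openin_T_top openin_subset openin_topspace subset_antisym)
qed

definition vertex_star :: "'a list \<Rightarrow> 'a tpt set" where
  "vertex_star w = {p. (fst p = w \<and> 1/2 < snd p \<and> snd p \<le> 1) \<or>
                       (\<exists>a. fst p = w @ [a] \<and> 0 < snd p \<and> snd p < 1/2)}"

lemma edge_map_in_vertex_star_iff:
  assumes "w \<noteq> []" "w' \<noteq> []" "s \<in> {0..1}"
  shows "edge_map w' s \<in> vertex_star w \<longleftrightarrow> (w' = w \<and> 1/2 < s) \<or> (butlast w' = w \<and> s < 1/2)"
proof (cases "s = 0")
  case True
  then show ?thesis
    using assms by (auto simp: edge_map_def vertex_def vertex_star_def)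
next
  case False
  have "(\<exists>a. w' = w @ [a]) \<longleftrightarrow> butlast w' = w"
    using assms(2) by (metis append_butlast_last_id butlast_snoc)
  then show ?thesis
    using False assms(3) by (auto simp: edge_map_def vertex_star_def)
qed

lemma openin_vertex_star:
  assumes "w \<noteq> []"
  shows "openin T_top (vertex_star w)"
  unfolding openin_T_top
proof (intro conjI allI impI)
  show "vertex_star w \<subseteq> Tpts"
    using assms by (auto simp: vertex_star_def Tpts_def)
  fix w' :: "'a list"
  assume "w' \<noteq> []"
  define S :: "real set" where "S = (if w' = w then {1/2<..} else {}) \<union> (if butlast w' = w then {..<1/2} else {})"
  have "{s \<in> {0..1}. edge_map w' s \<in> vertex_star w} = {0..1} \<inter> S"
    using edge_map_in_vertex_star_iff[OF assms \<open>w' \<noteq> []\<close>] by (auto simp: S_def)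
  moreover have "open S"
    by (simp add: S_def open_Un)
  ultimately show "openin (top_of_set {0..1}) {s \<in> {0..1}. edge_map w' s \<in> vertex_star w}"
    by (simp add: openin_open_Int)
qed

lemma act_vertex_in_vertex_star_iff:
  "v \<noteq> [] \<Longrightarrow> act \<sigma> (vertex v) \<in> vertex_star w \<longleftrightarrow> \<sigma> v = w"
  by (simp add: act_def vertex_def vertex_star_def)

lemma locally_continuous_imp_continuous_map:
  assumes "f ` topspace X \<subseteq> topspace Y"
    and "\<And>x. x \<in> topspace X \<Longrightarrow> \<exists>V. openin X V \<and> x \<in> V \<and> continuous_map (subtopology X V) Y f"
  shows "continuous_map X Y f"
  unfolding continuous_map_def
proof (intro conjI allI impI)
  show "f \<in> topspace X \<rightarrow> topspace Y"
    using assms(1) by blast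
  fix U
  assume "openin Y U"
  show "openin X {x \<in> topspace X. f x \<in> U}"
  proof (subst openin_subopen, intro ballI)
    fix x
    assume x: "x \<in> {x \<in> topspace X. f x \<in> U}"
    then obtain V where V: "openin X V" "x \<in> V" "continuous_map (subtopology X V) Y f"
      using assms(2) by blast
    have "openin (subtopology X V) {y \<in> topspace (subtopology X V). f y \<in> U}"
      using V(3) \<open>openin Y U\<close> by (rule openin_continuous_map_preimage)
    then have "openin X {y \<in> V. f y \<in> U}"
      using V(1) openin_subset[OF V(1)] by (auto simp: Int_absorb1 dest: openin_trans_full)
    then show "\<exists>T. openin X T \<and> x \<in> T \<and> T \<subseteq> {x \<in> topspace X. f x \<in> U}"
      using x V(2) openin_subset[OF V(1)] by blast
  qed
qed

lemma continuous_on_smooth_map: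
  assumes "smooth_map m V n F"
  shows "continuous_on V F"
proof (rule continuous_on_coordinatewise_then_product)
  fix i
  show "continuous_on V (\<lambda>x. F x i)"
  proof (cases "i < n")
    case True
    then have "smooth_fun m V (\<lambda>x. F x i)"
      using assms by (simp add: smooth_map_def)
    then show ?thesis
      by (cases rule: smooth_fun.cases) auto
  next
    case False
    then have "\<forall>x\<in>V. F x i = 0"
      using assms by (auto simp: smooth_map_def Rn_def)
    then show ?thesis
      by (metis continuous_on_const continuous_on_cong)
  qed
qed

definition continuous_plots :: "(nat \<times> (nat \<Rightarrow> real) set \<times> ((nat \<Rightarrow> real) \<Rightarrow> 'a tpt)) set" where
  "continuous_plots = {(n, U, Q). open_Rn n U \<and> continuous_map (top_of_set U) T_top Q}"

lemma is_diffeology_continuous_plots: "is_diffeology Tpts continuous_plots"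
  unfolding is_diffeology_def
proof (intro conjI; intro allI impI)
  fix n U and Q :: "(nat \<Rightarrow> real) \<Rightarrow> 'a tpt"
  assume "(n, U, Q) \<in> continuous_plots"
  then show "open_Rn n U \<and> Q ` U \<subseteq> Tpts"
    by (auto simp: continuous_plots_def continuous_map_def topspace_T_top)
next
  fix n U c and Q :: "(nat \<Rightarrow> real) \<Rightarrow> 'a tpt"
  assume "open_Rn n U \<and> c \<in> Tpts \<and> (\<forall>x\<in>U. Q x = c)"
  then show "(n, U, Q) \<in> continuous_plots"
    by (auto simp: continuous_plots_def topspace_T_top intro: continuous_map_eq[OF continuous_map_const[THEN iffD2]])
next
  fix n U m V F and P Q :: "(nat \<Rightarrow> real) \<Rightarrow> 'a tpt"
  assume a: "(n, U, P) \<in> continuous_plots \<and> open_Rn m V \<and> smooth_map m V n F \<and> F ` V \<subseteq> U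
    \<and> (\<forall>x\<in>V. Q x = P (F x))"
  have "continuous_map (top_of_set V) (top_of_set U) F"
    using a continuous_on_smooth_map[of m V n F] by auto
  moreover have "continuous_map (top_of_set U) T_top P"
    using a by (simp add: continuous_plots_def)
  ultimately have "continuous_map (top_of_set V) T_top (P \<circ> F)"
    by (rule continuous_map_compose)
  then have "continuous_map (top_of_set V) T_top Q"
    by (rule continuous_map_eq) (use a in simp)
  then show "(m, V, Q) \<in> continuous_plots"
    using a by (simp add: continuous_plots_def)
next
  fix n U and Q :: "(nat \<Rightarrow> real) \<Rightarrow> 'a tpt"
  assume a: "open_Rn n U \<and> Q ` U \<subseteq> Tpts \<and>
    (\<forall>x\<in>U. \<exists>V. open_Rn n V \<and> x \<in> V \<and> V \<subseteq> U \<and> (n, V, Q) \<in> continuous_plots)"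
  have "continuous_map (top_of_set U) T_top Q"
  proof (rule locally_continuous_imp_continuous_map)
    show "Q ` topspace (top_of_set U) \<subseteq> topspace T_top"
      using a by (simp add: topspace_T_top)
    fix x
    assume "x \<in> topspace (top_of_set U)"
    then obtain V where V: "open_Rn n V" "x \<in> V" "V \<subseteq> U" "(n, V, Q) \<in> continuous_plots"
      using a by auto
    have "openin (top_of_set U) V"
      using V(1,3) a by (meson open_Rn_def openin_imp_subset openin_subset_trans)
    moreover have "continuous_map (subtopology (top_of_set U) V) T_top Q"
      using V(3,4) by (simp add: continuous_plots_def subtopology_subtopology Int_absorb1)
    ultimately show "\<exists>V. openin (top_of_set U) V \<and> x \<in> V \<and> continuous_map (subtopology (top_of_set U) V) T_top Q"
      using V(2) by blast
  qed
  then show "(n, U, Q) \<in> continuous_plots"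
    using a by (simp add: continuous_plots_def)
qed

lemma wire_generators_subset_continuous_plots: "wire_generators \<subseteq> continuous_plots"
proof
  fix g :: "nat \<times> (nat \<Rightarrow> real) set \<times> ((nat \<Rightarrow> real) \<Rightarrow> 'a tpt)"
  assume "g \<in> wire_generators"
  then obtain \<gamma> :: "real \<Rightarrow> 'a tpt" where g: "g = (1, Rn 1, \<lambda>x. \<gamma> (x 0))"
    and emb: "embedding_map euclideanreal T_top \<gamma>"
    unfolding wire_generators_def by blast
  from emb have "continuous_map euclideanreal T_top \<gamma>"
    unfolding embedding_map_def
    by (rule continuous_map_into_fulltopology[OF homeomorphic_imp_continuous_map])
  moreover have "continuous_map (top_of_set (Rn 1)) euclideanreal (\<lambda>x::nat \<Rightarrow> real. x 0)"
    using continuous_on_subset[OF continuous_on_product_coordinates] by simp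
  ultimately have "continuous_map (top_of_set (Rn 1)) T_top (\<gamma> \<circ> (\<lambda>x. x 0))"
    using continuous_map_compose by blast
  then show "g \<in> continuous_plots"
    by (simp add: g continuous_plots_def open_Rn_def o_def)
qed

lemma continuous_map_D_T:
  assumes "(n, U, Q) \<in> D_T"
  shows "continuous_map (top_of_set U) T_top Q"
proof -
  have "D_T \<subseteq> continuous_plots"
    unfolding D_T_def generated_diffeology_def
    by (rule Inter_lower) (simp add: is_diffeology_continuous_plots wire_generators_subset_continuous_plots)
  then show ?thesis
    using assms by (auto simp: continuous_plots_def)
qed

lemma constant_plot_in_generated_diffeology:
  assumes "open_Rn n U" "c \<in> X"
  shows "(n, U, \<lambda>x. c) \<in> generated_diffeology X G"
  unfolding generated_diffeology_def
proof (rule InterI)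
  fix D
  assume "D \<in> {D. is_diffeology X D \<and> G \<subseteq> D}"
  then have "is_diffeology X D"
    by simp
  then have "\<forall>n U c Q. open_Rn n U \<and> c \<in> X \<and> (\<forall>x\<in>U. Q x = c) \<longrightarrow> (n, U, Q) \<in> D"
    unfolding is_diffeology_def by (elim conjE)
  from this[rule_format, of n U c "\<lambda>x. c"] show "(n, U, \<lambda>x. c) \<in> D"
    using assms by simp
qed

lemma smooth_fun_coordinate: "smooth_fun n U (\<lambda>x. x i)"
proof -
  have "f = (\<lambda>x. x i) \<or> (\<exists>c. f = (\<lambda>x. c)) \<Longrightarrow> smooth_fun n U f" for f
  proof (coinduction arbitrary: f rule: smooth_fun.coinduct)
    case (smooth_fun f)
    have "continuous_on U f"
      using smooth_fun by (auto intro: continuous_on_subset[OF continuous_on_product_coordinates])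
    moreover have "\<exists>g. (\<forall>x\<in>U. has_partial j f x (g x)) \<and>
        ((\<exists>f. g = f \<and> (f = (\<lambda>x. x i) \<or> (\<exists>c. f = (\<lambda>x. c)))) \<or> smooth_fun n U g)" for j
    proof -
      have "\<exists>c. \<forall>x\<in>U. has_partial j f x c"
        using smooth_fun
      proof
        assume "f = (\<lambda>x. x i)"
        then show ?thesis
          by (cases "j = i")
            (auto simp: has_partial_def intro!: derivative_eq_intros exI[of _ "if j = i then 1 else 0"])
      qed (auto simp: has_partial_def intro!: derivative_eq_intros)
      then obtain c where "\<forall>x\<in>U. has_partial j f x c" ..
      then show ?thesis
        by (intro exI[of _ "\<lambda>x. c"]) blast
    qed
    ultimately show ?case
      by blast
  qed
  then show ?thesis
    by blast
qed

lemma aut_plot_vertex_path_continuous: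
  assumes "aut_plot P"
  shows "continuous_map euclideanreal T_top (\<lambda>u. act (P u) (vertex v))"
proof -
  have plot_action: "\<And>n U f Q. open_Rn n U \<Longrightarrow> smooth_fun n U f \<Longrightarrow> (n, U, Q) \<in> D_T \<Longrightarrow>
      (n, U, \<lambda>x. act (P (f x)) (Q x)) \<in> D_T"
    using assms unfolding aut_plot_def by blast
  have "open_Rn 1 (Rn 1)"
    by (simp add: open_Rn_def)
  moreover have "(1, Rn 1, \<lambda>x. vertex v) \<in> D_T"
    unfolding D_T_def
    by (rule constant_plot_in_generated_diffeology) (auto simp: open_Rn_def vertex_def Tpts_def)
  ultimately have "(1, Rn 1, \<lambda>x. act (P (x 0)) (vertex v)) \<in> D_T"
    using plot_action smooth_fun_coordinate by blast
  then have plot_continuous: "continuous_map (top_of_set (Rn 1)) T_top (\<lambda>x. act (P (x 0)) (vertex v))"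
    by (rule continuous_map_D_T)
  have embedding_continuous: "continuous_map euclideanreal (top_of_set (Rn 1)) (\<lambda>u i. if i = 0 then u else 0)"
  proof -
    have "continuous_on UNIV (\<lambda>u::real. \<lambda>i::nat. if i = 0 then u else 0)"
    proof (rule continuous_on_coordinatewise_then_product)
      fix i :: nat
      show "continuous_on UNIV (\<lambda>u::real. if i = 0 then u else 0)"
        by (cases "i = 0") auto
    qed
    then show ?thesis
      by (simp add: continuous_map_in_subtopology Rn_def)
  qed
  from continuous_map_compose[OF embedding_continuous plot_continuous] show ?thesis
    by (simp add: o_def)
qed

lemma AutT_Nil_iff: "\<sigma> \<in> AutT \<Longrightarrow> \<sigma> v = [] \<longleftrightarrow> v = []"
  unfolding AutT_def by (metis (mono_tags, lifting) bij_pointE mem_Collect_eq)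

lemma aut_plot_constant:
  assumes "aut_plot P"
  shows "P u = P 0"
proof
  fix v
  have Aut: "P u \<in> AutT" for u
    using assms unfolding aut_plot_def by blast
  show "P u v = P 0 v"
  proof (cases "v = []")
    case True
    then show ?thesis
      using Aut unfolding AutT_def by simp
  next
    case False
    have "(\<lambda>u. P u v) constant_on UNIV"
    proof (rule locally_constant_imp_constant[OF connected_UNIV])
      fix a :: real
      let ?T = "{u. act (P u) (vertex v) \<in> vertex_star (P a v)}"
      have "P a v \<noteq> []"
        using AutT_Nil_iff[OF Aut] False by blast
      then have "open ?T"
        using openin_continuous_map_preimage[OF aut_plot_vertex_path_continuous[OF assms]
            openin_vertex_star] by simp
      moreover have "?T = {u. P u v = P a v}"
        using act_vertex_in_vertex_star_iff[OF False] by blast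
      ultimately show "\<exists>T. openin (top_of_set UNIV) T \<and> a \<in> T \<and> (\<forall>x\<in>T. P x v = P a v)"
        by (intro exI[of _ "{u. P u v = P a v}"]) simp
    qed
    then show ?thesis
      by (auto simp: constant_on_def)
  qed
qed

lemma adj_siblings_imp_parent:
  assumes "adj x (v @ [a])" "adj x (v @ [b])" "a \<noteq> b"
  shows "x = v"
  using assms unfolding adj_def by auto

lemma Stab_Suc_subset:
  assumes "CARD('a::finite) \<ge> 2"
  shows "(Stab (Suc k) :: ('a list \<Rightarrow> 'a list) set) \<subseteq> Stab k"
proof
  fix \<sigma> :: "'a list \<Rightarrow> 'a list"
  assume \<sigma>: "\<sigma> \<in> Stab (Suc k)"
  have "\<not> (\<forall>a\<in>UNIV. \<forall>b\<in>UNIV. a = (b::'a))"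
    using assms card_le_Suc0_iff_eq[of "UNIV :: 'a set"] by auto
  then obtain a b :: 'a where "a \<noteq> b"
    by blast
  have adj_iff: "adj x y \<longleftrightarrow> adj (\<sigma> x) (\<sigma> y)" for x y
    using \<sigma> unfolding Stab_def AutT_def by blast
  have "\<sigma> v = v" if "length v = k" for v
  proof -
    have "adj (\<sigma> v) (v @ [c])" for c
    proof -
      have "\<sigma> (v @ [c]) = v @ [c]"
        using \<sigma> that by (simp add: Stab_def)
      moreover have "adj v (v @ [c])"
        by (simp add: adj_def)
      ultimately show ?thesis
        using adj_iff by metis
    qed
    from adj_siblings_imp_parent[OF this this \<open>a \<noteq> b\<close>] show ?thesis .
  qed
  then show "\<sigma> \<in> Stab k"
    using \<sigma> unfolding Stab_def by blast
qed

lemma Stab_antimono: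
  assumes "CARD('a::finite) \<ge> 2" "m \<le> n"
  shows "(Stab n :: ('a list \<Rightarrow> 'a list) set) \<subseteq> Stab m"
  using lift_Suc_antimono_le[of "Stab :: nat \<Rightarrow> ('a list \<Rightarrow> 'a list) set",
      OF Stab_Suc_subset[OF assms(1)] assms(2)] .

lemma openin_congruence_top:
  assumes "CARD('a::finite) \<ge> 2"
  shows "openin congruence_top U \<longleftrightarrow> U \<subseteq> (AutT :: ('a list \<Rightarrow> 'a list) set) \<and>
      (\<forall>\<sigma>\<in>U. \<exists>n. (\<lambda>\<tau>. \<sigma> \<circ> \<tau>) ` Stab n \<subseteq> U)"
proof -
  have top: "istopology (\<lambda>U::('a list \<Rightarrow> 'a list) set. U \<subseteq> AutT \<and>
      (\<forall>\<sigma>\<in>U. \<exists>n. (\<lambda>\<tau>. \<sigma> \<circ> \<tau>) ` Stab n \<subseteq> U))"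
    unfolding istopology_def
  proof (rule conjI; intro allI impI)
    fix S T :: "('a list \<Rightarrow> 'a list) set"
    assume S: "S \<subseteq> AutT \<and> (\<forall>\<sigma>\<in>S. \<exists>n. (\<lambda>\<tau>. \<sigma> \<circ> \<tau>) ` Stab n \<subseteq> S)"
      and T: "T \<subseteq> AutT \<and> (\<forall>\<sigma>\<in>T. \<exists>n. (\<lambda>\<tau>. \<sigma> \<circ> \<tau>) ` Stab n \<subseteq> T)"
    show "S \<inter> T \<subseteq> AutT \<and> (\<forall>\<sigma>\<in>S \<inter> T. \<exists>n. (\<lambda>\<tau>. \<sigma> \<circ> \<tau>) ` Stab n \<subseteq> S \<inter> T)"
    proof (intro conjI ballI)
      show "S \<inter> T \<subseteq> AutT"
        using S by blast
      fix \<sigma>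
      assume "\<sigma> \<in> S \<inter> T"
      then obtain n1 n2 where "(\<lambda>\<tau>. \<sigma> \<circ> \<tau>) ` Stab n1 \<subseteq> S" "(\<lambda>\<tau>. \<sigma> \<circ> \<tau>) ` Stab n2 \<subseteq> T"
        using S T by blast
      moreover have "Stab (max n1 n2) \<subseteq> (Stab n1 :: ('a list \<Rightarrow> 'a list) set)"
        "Stab (max n1 n2) \<subseteq> (Stab n2 :: ('a list \<Rightarrow> 'a list) set)"
        by (simp_all add: Stab_antimono[OF assms])
      ultimately show "\<exists>n. (\<lambda>\<tau>. \<sigma> \<circ> \<tau>) ` Stab n \<subseteq> S \<inter> T"
        by blast
    qed
  next
    fix K :: "('a list \<Rightarrow> 'a list) set set"
    assume K: "\<forall>S\<in>K. S \<subseteq> AutT \<and> (\<forall>\<sigma>\<in>S. \<exists>n. (\<lambda>\<tau>. \<sigma> \<circ> \<tau>) ` Stab n \<subseteq> S)"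
    show "\<Union>K \<subseteq> AutT \<and> (\<forall>\<sigma>\<in>\<Union>K. \<exists>n. (\<lambda>\<tau>. \<sigma> \<circ> \<tau>) ` Stab n \<subseteq> \<Union>K)"
    proof (intro conjI ballI)
      show "\<Union>K \<subseteq> AutT"
        using K by blast
      fix \<sigma>
      assume "\<sigma> \<in> \<Union>K"
      then obtain S where "S \<in> K" "\<sigma> \<in> S"
        by blast
      then obtain n where "(\<lambda>\<tau>. \<sigma> \<circ> \<tau>) ` Stab n \<subseteq> S"
        using K by blast
      then show "\<exists>n. (\<lambda>\<tau>. \<sigma> \<circ> \<tau>) ` Stab n \<subseteq> \<Union>K"
        using \<open>S \<in> K\<close> by blast
    qed
  qed
  show ?thesis
    unfolding congruence_top_def by (subst topology_inverse'[OF top]) (rule refl)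
qed

lemma AutT_subset_topspace_congruence_top:
  assumes "CARD('a::finite) \<ge> 2"
  shows "(AutT :: ('a list \<Rightarrow> 'a list) set) \<subseteq> topspace congruence_top"
proof (rule openin_subset)
  have "(\<lambda>\<tau>. \<sigma> \<circ> \<tau>) ` Stab 0 \<subseteq> AutT" if "\<sigma> \<in> AutT" for \<sigma> :: "'a list \<Rightarrow> 'a list"
    using that by (auto simp: Stab_def AutT_def intro: bij_comp)
  then show "openin congruence_top (AutT :: ('a list \<Rightarrow> 'a list) set)"
    by (auto simp: openin_congruence_top[OF assms])
qed

theorem mainTheorem4:
  fixes P :: "real \<Rightarrow> ('a::finite list \<Rightarrow> 'a list)"
  assumes "CARD('a) \<ge> 2"
    and "aut_plot P"
  shows "(\<exists>\<sigma>. limitin congruence_top (\<lambda>n::nat. P (real n)) \<sigma> sequentially)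
       \<and> (\<exists>\<sigma>. limitin congruence_top (\<lambda>m::nat. P (- real m)) \<sigma> sequentially)"
proof -
  have "P 0 \<in> AutT"
    using assms(2) unfolding aut_plot_def by blast
  then have "limitin congruence_top (\<lambda>_. P 0) (P 0) sequentially"
    using AutT_subset_topspace_congruence_top[OF assms(1)] by auto
  moreover have "(\<lambda>n::nat. P (real n)) = (\<lambda>_. P 0)" "(\<lambda>m::nat. P (- real m)) = (\<lambda>_. P 0)"
    by (rule ext, rule aut_plot_constant[OF assms(2)])+
  ultimately show ?thesis
    by metis
qed

end
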